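(* Consider an instance of Solitaire Hanabi with a single color ($c=1$), values $1,\dots,n$, hand size $h$, and deck $\sigma=(a_1,\dots,a_N)$ (listing the values of the cards). Call the $i$-th card useless if there exist integers $w_1,\dots,w_{h+1}$ with $a_i<w_1<\dots<w_{h+1}\le n$ such that $a_j\notin\{w_1,\dots,w_{h+1}\}$ for all $j\in\{i+1,\dots,N\}$. Then no winning play sequence plays a useless card.
   Context: Solitaire Hanabi: a card is a pair $(a,k)$ with value $a\in\{1,\dots,n\}$ and color $k\in\{1,\dots,c\}$. The deck is a fully known sequence of $N$ cards drawn one by one in order, starting with an empty hand. When a card is drawn the player may discard it (gone forever), store it in hand, or play it immediately; at no time may more than $h$ cards be stored in hand. A card $(a,k)$ may be played iff either $a=1$ and no card of color $k$ has been played, or the last card of color $k$ played has value $a-1$. After playing a card, the player may also play stored cards obeying the same rule. A winning play sequence is one that plays (one copy of) every card $(a,k)$, $1\le a\le n$, $1\le k\le c$. *)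

theory Defs
  imports Main
begin

text \<open>The deck is a list of values (card i is deck ! i,
  0-indexed). A game state is (H, top, P): H = set of deck indices currently stored in hand,
  top = value of the last card played (0 if none has been played yet), P = list of deck
  indices played so far, in order of play.\<close>

type_synonym hstate = "nat set \<times> nat \<times> nat list"

inductive stored_plays :: "nat list \<Rightarrow> hstate \<Rightarrow> hstate \<Rightarrow> bool" for deck where
  stop: "stored_plays deck s s"
| play: "j \<in> H \<Longrightarrow> deck ! j = t + 1 \<Longrightarrow>
         stored_plays deck (H - {j}, deck ! j, P @ [j]) s' \<Longrightarrow>
         stored_plays deck (H, t, P) s'"

inductive reach :: "nat list \<Rightarrow> nat \<Rightarrow> nat \<Rightarrow> hstate \<Rightarrow> bool" for deck h where
  start: "reach deck h 0 ({}, 0, [])"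
| discard: "reach deck h k (H, t, P) \<Longrightarrow> k < length deck \<Longrightarrow>
            reach deck h (Suc k) (H, t, P)"
| store: "reach deck h k (H, t, P) \<Longrightarrow> k < length deck \<Longrightarrow> card H + 1 \<le> h \<Longrightarrow>
          reach deck h (Suc k) (insert k H, t, P)"
| play: "reach deck h k (H, t, P) \<Longrightarrow> k < length deck \<Longrightarrow> deck ! k = t + 1 \<Longrightarrow>
         stored_plays deck (H, deck ! k, P @ [k]) s \<Longrightarrow>
         reach deck h (Suc k) s"

definition winning :: "nat list \<Rightarrow> nat \<Rightarrow> nat \<Rightarrow> nat list \<Rightarrow> bool" where
  "winning deck n h P \<longleftrightarrow>
     (\<exists>H t. reach deck h (length deck) (H, t, P)) \<and> {1..n} \<subseteq> (\<lambda>j. deck ! j) ` set P"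

definition useless :: "nat list \<Rightarrow> nat \<Rightarrow> nat \<Rightarrow> nat \<Rightarrow> bool" where
  "useless deck n h i \<longleftrightarrow>
     (\<exists>ws :: nat list. length ws = h + 1 \<and> sorted_wrt (<) ws \<and>
        (\<forall>w \<in> set ws. deck ! i < w \<and> w \<le> n) \<and>
        (\<forall>j. i < j \<and> j < length deck \<longrightarrow> deck ! j \<notin> set ws))"

end

theory Submission
  imports Defs
begin

text \<open>If the i-th card is played, then every value above it must still be played
  afterwards, and a card with such a value must have been drawn before card i (no later card
  carries one of the values w). Each of these cards therefore sat in the hand at the moment card i
  was played, so there are at most h of them; a useless card has h + 1 such values.\<close>

text \<open>Every card in \<open>pending H P p\<close> was in the hand when the p-th card of P was played.\<close>

definition pending :: "nat set \<Rightarrow> nat list \<Rightarrow> nat \<Rightarrow> nat set" where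
  "pending H P p = {P ! q | q. p < q \<and> q < length P \<and> P ! q < P ! p} \<union> {j \<in> H. j < P ! p}"

definition hanabi_invariant :: "nat list \<Rightarrow> nat \<Rightarrow> nat \<Rightarrow> hstate \<Rightarrow> bool" where
  "hanabi_invariant deck h K s = (case s of (H, t, P) \<Rightarrow>
     finite H \<and> card H \<le> h \<and> H \<subseteq> {..<K} \<and> set P \<subseteq> {..<K} \<and> length P = t \<and>
     (\<forall>q < length P. deck ! (P ! q) = Suc q) \<and> (\<forall>p < length P. card (pending H P p) \<le> h))"

lemma finite_pending: "finite H \<Longrightarrow> finite (pending H P p)"
  by (rule finite_subset[of _ "set P \<union> H"]) (auto simp: pending_def)

lemma pending_append_subset:
  assumes "p < length P" "x < P ! p \<Longrightarrow> x \<in> H'" "H \<subseteq> H'"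
  shows "pending H (P @ [x]) p \<subseteq> pending H' P p"
  using assms by (auto simp: pending_def nth_append split: if_splits)

lemma pending_append_last: "pending H (P @ [x]) (length P) \<subseteq> H"
  by (auto simp: pending_def nth_append)

lemma hanabi_invariant_mono:
  "hanabi_invariant deck h K s \<Longrightarrow> K \<le> K' \<Longrightarrow> hanabi_invariant deck h K' s"
  by (auto simp: hanabi_invariant_def split: prod.splits)

lemma hanabi_invariant_store:
  assumes "hanabi_invariant deck h k (H, t, P)" "card H + 1 \<le> h"
  shows "hanabi_invariant deck h (Suc k) (insert k H, t, P)"
proof -
  have "pending (insert k H) P p = pending H P p" if "p < length P" for p
  proof -
    have "P ! p < k" using assms(1) that nth_mem by (fastforce simp: hanabi_invariant_def)
    then show ?thesis by (auto simp: pending_def)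
  qed
  with assms show ?thesis by (auto simp: hanabi_invariant_def card_insert_if)
qed

text \<open>Covers a play from the hand (\<open>H' = H - {j}\<close>) as well as a play from the deck
  (\<open>H' = H\<close>, with j drawn after every played card).\<close>

lemma hanabi_invariant_play:
  assumes inv: "hanabi_invariant deck h K (H, t, P)"
    and "j < K" "deck ! j = Suc t" "H' \<subseteq> H"
    and held: "\<And>p. p < length P \<Longrightarrow> j < P ! p \<Longrightarrow> j \<in> H"
  shows "hanabi_invariant deck h K (H', Suc t, P @ [j])"
proof -
  have fin: "finite H" "card H \<le> h" and len: "length P = t"
    and pend: "\<And>p. p < length P \<Longrightarrow> card (pending H P p) \<le> h"
    using inv by (auto simp: hanabi_invariant_def)
  have "card (pending H' (P @ [j]) p) \<le> h" if "p < Suc (length P)" for p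
  proof (cases "p < length P")
    case True
    then have "pending H' (P @ [j]) p \<subseteq> pending H P p"
      using held \<open>H' \<subseteq> H\<close> by (intro pending_append_subset) auto
    then show ?thesis
      using pend[OF True] finite_pending[OF fin(1)] card_mono le_trans by blast
  next
    case False
    with that have "p = length P" by simp
    then have "pending H' (P @ [j]) p \<subseteq> H"
      using pending_append_last[of H' P j] \<open>H' \<subseteq> H\<close> by auto
    then show ?thesis using fin card_mono le_trans by blast
  qed
  moreover have "card H' \<le> h" using fin \<open>H' \<subseteq> H\<close> card_mono le_trans by blast
  ultimately show ?thesis
    using inv assms(2-4) len finite_subset[OF \<open>H' \<subseteq> H\<close> fin(1)]
    by (auto simp: hanabi_invariant_def nth_append less_Suc_eq)
qed

lemma hanabi_invariant_stored_plays:
  "stored_plays deck s s' \<Longrightarrow> hanabi_invariant deck h K s \<Longrightarrow> hanabi_invariant deck h K s'"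
proof (induction rule: stored_plays.induct)
  case (stop s)
  then show ?case .
next
  case (play j H t P s')
  have "hanabi_invariant deck h K (H - {j}, Suc t, P @ [j])"
    using play.prems play.hyps(1,2)
    by (intro hanabi_invariant_play) (auto simp: hanabi_invariant_def)
  then show ?case using play.IH play.hyps(2) by simp
qed

lemma hanabi_invariant_reach: "reach deck h k s \<Longrightarrow> hanabi_invariant deck h k s"
proof (induction rule: reach.induct)
  case start
  then show ?case by (simp add: hanabi_invariant_def)
next
  case (discard k H t P)
  show ?case using discard.IH by (rule hanabi_invariant_mono) simp
next
  case (store k H t P)
  then show ?case by (intro hanabi_invariant_store)
next
  case (play k H t P s)
  have inv: "hanabi_invariant deck h (Suc k) (H, t, P)"
    using play.IH by (rule hanabi_invariant_mono) simp
  moreover have "\<And>p. p < length P \<Longrightarrow> P ! p < k"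
    using play.IH nth_mem by (fastforce simp: hanabi_invariant_def)
  ultimately have "hanabi_invariant deck h (Suc k) (H, Suc t, P @ [k])"
    using play.hyps(3) by (intro hanabi_invariant_play) fastforce+
  then show ?case using play.hyps(3,4) hanabi_invariant_stored_plays by simp
qed

lemma card_values_played_late_le:
  assumes inv: "hanabi_invariant deck h (length deck) (H, t, P)" and m: "m < length P"
    and W_played: "W \<subseteq> (\<lambda>j. deck ! j) ` set P"
    and W_above: "\<And>w. w \<in> W \<Longrightarrow> deck ! (P ! m) < w"
    and W_not_later: "\<And>j. P ! m < j \<Longrightarrow> j < length deck \<Longrightarrow> deck ! j \<notin> W"
  shows "card W \<le> h"
proof -
  have played_value: "\<And>q. q < length P \<Longrightarrow> deck ! (P ! q) = Suc q"
    and drawn: "set P \<subseteq> {..<length deck}" and fin: "finite H"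
    using inv by (auto simp: hanabi_invariant_def)
  have "W \<subseteq> (\<lambda>j. deck ! j) ` pending H P m"
  proof
    fix w assume "w \<in> W"
    then obtain q where q: "q < length P" "deck ! (P ! q) = w"
      using W_played by (force simp: in_set_conv_nth)
    have "m < q" using W_above[OF \<open>w \<in> W\<close>] q played_value m by auto
    moreover have "P ! q < P ! m"
      using W_not_later[of "P ! q"] W_above[OF \<open>w \<in> W\<close>] \<open>w \<in> W\<close> q drawn
      by (metis lessThan_iff linorder_neqE_nat nth_mem order.strict_iff_not subsetD)
    ultimately have "P ! q \<in> pending H P m" using q by (auto simp: pending_def)
    then show "w \<in> (\<lambda>j. deck ! j) ` pending H P m" using q by auto
  qed
  then have "card W \<le> card (pending H P m)"
    using finite_pending[OF fin] card_mono card_image_le finite_imageI le_trans by metis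
  also have "\<dots> \<le> h" using inv m by (auto simp: hanabi_invariant_def)
  finally show ?thesis .
qed

theorem mainTheorem2:
  fixes deck :: "nat list" and n h i :: nat and P :: "nat list"
  assumes "\<forall>a \<in> set deck. 1 \<le> a \<and> a \<le> n"
    and "i < length deck"
    and "useless deck n h i"
    and "winning deck n h P"
  shows "i \<notin> set P"
proof
  assume "i \<in> set P"
  then obtain m where m: "m < length P" "P ! m = i" by (auto simp: in_set_conv_nth)
  obtain H t where R: "reach deck h (length deck) (H, t, P)"
    and covered: "{1..n} \<subseteq> (\<lambda>j. deck ! j) ` set P"
    using assms(4) unfolding winning_def by auto
  obtain ws where ws: "length ws = h + 1" "sorted_wrt (<) ws"
    "\<forall>w \<in> set ws. deck ! i < w \<and> w \<le> n"
    "\<forall>j. i < j \<and> j < length deck \<longrightarrow> deck ! j \<notin> set ws"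
    using assms(3) unfolding useless_def by auto
  have "card (set ws) \<le> h"
    using hanabi_invariant_reach[OF R] m(1)
  proof (rule card_values_played_late_le)
    show "set ws \<subseteq> (\<lambda>j. deck ! j) ` set P" using ws(3) covered by force
  qed (use ws(3,4) m(2) in auto)
  moreover have "card (set ws) = h + 1"
    using ws(1,2) distinct_card strict_sorted_iff by metis
  ultimately show False by simp
qed

end
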